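(* Let $P$ be a shortest path (a path of minimum length between its two end vertices) in a honeycomb toroidal graph $\mathrm{HTG}(m,n,\ell)$, and let $0\le i\le m-2$. If $P$ contains two flat edges between column $i$ and column $i+1$ that are consecutive among the flat edges of $P$ between these two columns, then some jump edge of $P$ lies between them along $P$. In particular, if $P$ contains no jump edge, then $P$ contains at most one flat edge between column $i$ and column $i+1$, for each $i$.
   Context: Honeycomb toroidal graph: let $m\ge 1$ be an integer, $n\ge 4$ an even integer, and $\ell$ an integer with $\ell\equiv m \pmod 2$. The graph $\mathrm{HTG}(m,n,\ell)$ has vertex set $\{u_{i,j}: 0\le i\le m-1,\ j\in\mathbb{Z}_n\}$ (second subscripts are taken modulo $n$; the vertices $u_{i,0},\dots,u_{i,n-1}$ form column $i$) and the following edges: vertical edges $u_{i,j}u_{i,j+1}$ for all $0\le i\le m-1$ and all $j$; flat edges $u_{i,j}u_{i+1,j}$ for $0\le i\le m-2$ and all $j$ with $i+j$ odd; jump edges $u_{m-1,j}u_{0,j+\ell}$ for all $j$ with $j\equiv m\pmod 2$. Only parameters for which this is a simple 3-regular graph are allowed (in particular, when $m=1$ one requires $\ell\not\equiv\pm1\pmod n$). *)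

theory Defs
  imports Main
begin

text \<open>Vertex u_{i,j} is the pair (i,j) with i < m and j < n (j represents an element of Z_n).\<close>

type_synonym vtx = "nat \<times> nat"

definition htg_vert :: "nat \<Rightarrow> nat \<Rightarrow> vtx set" where
  "htg_vert m n = {(i, j). i < m \<and> j < n}"

definition vertical_dir :: "nat \<Rightarrow> vtx \<Rightarrow> vtx \<Rightarrow> bool" where
  "vertical_dir n u v \<longleftrightarrow> fst v = fst u \<and> snd v = (snd u + 1) mod n"

definition flat_dir :: "nat \<Rightarrow> vtx \<Rightarrow> vtx \<Rightarrow> bool" where
  "flat_dir m u v \<longleftrightarrow> fst u + 1 < m \<and> fst v = fst u + 1 \<and> snd v = snd u \<and> odd (fst u + snd u)"

definition jump_dir :: "nat \<Rightarrow> nat \<Rightarrow> int \<Rightarrow> vtx \<Rightarrow> vtx \<Rightarrow> bool" where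
  "jump_dir m n l u v \<longleftrightarrow> fst u = m - 1 \<and> fst v = 0 \<and> snd u mod 2 = m mod 2
      \<and> int (snd v) = (int (snd u) + l) mod int n"

definition htg_vertical_edge :: "nat \<Rightarrow> nat \<Rightarrow> vtx \<Rightarrow> vtx \<Rightarrow> bool" where
  "htg_vertical_edge m n u v \<longleftrightarrow> u \<in> htg_vert m n \<and> v \<in> htg_vert m n \<and>
      (vertical_dir n u v \<or> vertical_dir n v u)"

definition htg_flat_edge :: "nat \<Rightarrow> nat \<Rightarrow> vtx \<Rightarrow> vtx \<Rightarrow> bool" where
  "htg_flat_edge m n u v \<longleftrightarrow> u \<in> htg_vert m n \<and> v \<in> htg_vert m n \<and>
      (flat_dir m u v \<or> flat_dir m v u)"

definition htg_jump_edge :: "nat \<Rightarrow> nat \<Rightarrow> int \<Rightarrow> vtx \<Rightarrow> vtx \<Rightarrow> bool" where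
  "htg_jump_edge m n l u v \<longleftrightarrow> u \<in> htg_vert m n \<and> v \<in> htg_vert m n \<and>
      (jump_dir m n l u v \<or> jump_dir m n l v u)"

definition htg_adj :: "nat \<Rightarrow> nat \<Rightarrow> int \<Rightarrow> vtx \<Rightarrow> vtx \<Rightarrow> bool" where
  "htg_adj m n l u v \<longleftrightarrow> htg_vertical_edge m n u v \<or> htg_flat_edge m n u v \<or> htg_jump_edge m n l u v"

text \<open>Admissible parameters (simple 3-regular graph).\<close>

definition htg_params :: "nat \<Rightarrow> nat \<Rightarrow> int \<Rightarrow> bool" where
  "htg_params m n l \<longleftrightarrow> m \<ge> 1 \<and> n \<ge> 4 \<and> even n \<and> l mod 2 = int m mod 2 \<and>
      (m = 1 \<longrightarrow> l mod int n \<noteq> 1 \<and> l mod int n \<noteq> int n - 1)"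

text \<open>A walk is a nonempty list of vertices with consecutive vertices adjacent;
  its length is the number of edges, i.e. length - 1.\<close>

definition htg_walk :: "nat \<Rightarrow> nat \<Rightarrow> int \<Rightarrow> vtx list \<Rightarrow> bool" where
  "htg_walk m n l W \<longleftrightarrow> W \<noteq> [] \<and> set W \<subseteq> htg_vert m n \<and>
      (\<forall>k. k + 1 < length W \<longrightarrow> htg_adj m n l (W ! k) (W ! (k + 1)))"

definition htg_path :: "nat \<Rightarrow> nat \<Rightarrow> int \<Rightarrow> vtx list \<Rightarrow> bool" where
  "htg_path m n l P \<longleftrightarrow> htg_walk m n l P \<and> distinct P"

definition htg_shortest_path :: "nat \<Rightarrow> nat \<Rightarrow> int \<Rightarrow> vtx list \<Rightarrow> bool" where
  "htg_shortest_path m n l P \<longleftrightarrow> htg_path m n l P \<and>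
      (\<forall>Q. htg_walk m n l Q \<and> hd Q = hd P \<and> last Q = last P \<longrightarrow> length P \<le> length Q)"

definition flat_between :: "nat \<Rightarrow> nat \<Rightarrow> nat \<Rightarrow> vtx list \<Rightarrow> nat \<Rightarrow> bool" where
  "flat_between m n i P k \<longleftrightarrow> k + 1 < length P \<and> htg_flat_edge m n (P ! k) (P ! (k + 1)) \<and>
      {fst (P ! k), fst (P ! (k + 1))} = {i, i + 1}"

definition jump_at :: "nat \<Rightarrow> nat \<Rightarrow> int \<Rightarrow> vtx list \<Rightarrow> nat \<Rightarrow> bool" where
  "jump_at m n l P k \<longleftrightarrow> k + 1 < length P \<and> htg_jump_edge m n l (P ! k) (P ! (k + 1))"

end

theory Submission imports Defs begin

text \<open>Without a jump edge in between, the part of a path strictly between two consecutive flat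
  edges across the cut between columns \<open>i\<close> and \<open>i + 1\<close> stays on one side of that cut, so both
  flat edges leave the same column. Every vertical or flat edge of that part projects onto this
  column as a vertical edge or a single vertex, so projecting it gives a walk between the outer
  ends of the two flat edges that is two edges shorter, contradicting minimality.\<close>

lemma successively_remdups_adj_reflclp:
  "successively (\<lambda>x y. x = y \<or> R x y) xs \<Longrightarrow> successively R (remdups_adj xs)"
  by (induction xs rule: remdups_adj.induct) (auto simp: successively_Cons)

lemma successively_eq_hd_last:
  "successively (\<lambda>x y. f x = f y) xs \<Longrightarrow> xs \<noteq> [] \<Longrightarrow> f (hd xs) = f (last xs)"
  by (induction xs rule: induct_list012) auto

lemma successively_splice:
  assumes "successively R xs" "successively R ys" "ys \<noteq> []" "a \<le> b" "b < length xs"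
    and "hd ys = xs ! a" "last ys = xs ! b"
  shows "successively R (take a xs @ ys @ drop (Suc b) xs)"
proof -
  have take: "successively R (take a xs)" and drop: "successively R (drop (Suc b) xs)"
    using assms(1) by (metis append_take_drop_id successively_append_iff)+
  have "take a xs = [] \<or> R (last (take a xs)) (hd ys)"
  proof (cases a)
    case (Suc a')
    then have "last (take a xs) = xs ! a'" using assms(4,5) by (simp add: take_Suc_conv_app_nth)
    then show ?thesis using Suc assms(1,4-6) by (simp add: successively_nth)
  qed simp
  moreover have "drop (Suc b) xs = [] \<or> R (last ys) (hd (drop (Suc b) xs))"
    using assms(1,7) by (cases "Suc b < length xs") (simp_all add: hd_drop_conv_nth successively_nth)
  ultimately show ?thesis
    using take drop assms(2,3) by (auto simp: successively_append_iff)
qed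

lemma successively_drop_take_iff:
  assumes "b < length xs"
  shows "successively R (drop a (take (Suc b) xs)) \<longleftrightarrow> (\<forall>k. a \<le> k \<and> k < b \<longrightarrow> R (xs ! k) (xs ! Suc k))"
  (is "_ \<longleftrightarrow> ?R")
proof -
  have "(\<forall>j. Suc j < Suc b - a \<longrightarrow> R (xs ! (a + j)) (xs ! Suc (a + j))) \<longleftrightarrow> ?R" (is "?L \<longleftrightarrow> _")
  proof
    assume ?L
    show ?R
    proof (intro allI impI)
      fix k assume "a \<le> k \<and> k < b"
      moreover have "Suc (k - a) < Suc b - a" using \<open>a \<le> k \<and> k < b\<close> by arith
      ultimately show "R (xs ! k) (xs ! Suc k)" using \<open>?L\<close>[rule_format, of "k - a"] by simp
    qed
  qed auto
  then show ?thesis using assms by (simp add: successively_conv_nth)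
qed

lemma htg_walk_iff_successively:
  "htg_walk m n l W \<longleftrightarrow> W \<noteq> [] \<and> set W \<subseteq> htg_vert m n \<and> successively (htg_adj m n l) W"
  unfolding htg_walk_def successively_conv_nth by simp

lemma htg_flat_edge_same_row: "htg_flat_edge m n u v \<Longrightarrow> snd u = snd v"
  unfolding htg_flat_edge_def flat_dir_def by auto

lemma htg_adj_same_side:
  assumes "htg_adj m n l u v" "\<not> htg_jump_edge m n l u v"
    and "\<not> (htg_flat_edge m n u v \<and> {fst u, fst v} = {i, i + 1})"
  shows "fst u \<le> i \<longleftrightarrow> fst v \<le> i"
  using assms
  unfolding htg_adj_def htg_vertical_edge_def htg_flat_edge_def vertical_dir_def flat_dir_def
  by (auto simp: insert_commute)

lemma htg_adj_project_to_column:
  assumes "htg_adj m n l u v" "\<not> htg_jump_edge m n l u v" "c < m"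
  shows "(c, snd u) = (c, snd v) \<or> htg_adj m n l (c, snd u) (c, snd v)"
  using assms
  unfolding htg_adj_def htg_vertical_edge_def htg_flat_edge_def vertical_dir_def flat_dir_def
    htg_vert_def
  by auto

lemma htg_walk_project_to_column:
  assumes "W \<noteq> []" "set W \<subseteq> htg_vert m n"
    and "successively (\<lambda>u v. htg_adj m n l u v \<and> \<not> htg_jump_edge m n l u v) W" "c < m"
  shows "htg_walk m n l (remdups_adj (map (\<lambda>v. (c, snd v)) W))"
proof -
  have "successively (\<lambda>x y. x = y \<or> htg_adj m n l x y) (map (\<lambda>v. (c, snd v)) W)"
    unfolding successively_map
    using assms(3) by (rule successively_mono) (use htg_adj_project_to_column assms(4) in blast)
  then show ?thesis
    using assms(1,2,4)
    by (auto simp: htg_walk_iff_successively htg_vert_def intro: successively_remdups_adj_reflclp)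
qed

lemma shortest_path_segment_length:
  assumes "htg_shortest_path m n l P" "a \<le> b" "b < length P"
    and "htg_walk m n l W" "hd W = P ! a" "last W = P ! b"
  shows "b - a < length W"
proof -
  define Q where "Q = take a P @ W @ drop (Suc b) P"
  have P: "htg_walk m n l P" and shortest: "\<And>Q. htg_walk m n l Q \<Longrightarrow> hd Q = hd P \<Longrightarrow>
      last Q = last P \<Longrightarrow> length P \<le> length Q"
    using assms(1) unfolding htg_shortest_path_def htg_path_def by auto
  have "successively (htg_adj m n l) Q"
    unfolding Q_def using P assms(2-6)
    by (intro successively_splice) (auto simp: htg_walk_iff_successively)
  moreover have "set Q \<subseteq> htg_vert m n"
    unfolding Q_def using P assms(4) set_take_subset[of a P] set_drop_subset[of "Suc b" P]
    by (auto simp: htg_walk_iff_successively)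
  ultimately have "htg_walk m n l Q"
    unfolding Q_def using assms(4) by (auto simp: htg_walk_iff_successively)
  moreover have "hd Q = hd P"
    using assms(3-5) by (cases a; cases P) (auto simp: Q_def htg_walk_def)
  moreover have "last Q = last P"
  proof (cases "Suc b < length P")
    case False
    then have "last P = P ! b"
      using assms(3) last_conv_nth[of P] by (metis Suc_lessI diff_Suc_1 list.size(3) not_less0)
    then show ?thesis using False assms(4,6) by (simp add: Q_def htg_walk_def)
  qed (simp add: Q_def)
  ultimately have "length P \<le> length Q" by (rule shortest)
  then show ?thesis using assms(2,3) by (simp add: Q_def)
qed

lemma consecutive_flat_edges_separated_by_jump:
  assumes sp: "htg_shortest_path m n l P" and "k1 < k2"
    and flat1: "flat_between m n i P k1" and flat2: "flat_between m n i P k2"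
    and no_flat: "\<forall>k. k1 < k \<and> k < k2 \<longrightarrow> \<not> flat_between m n i P k"
  shows "\<exists>k. k1 < k \<and> k < k2 \<and> jump_at m n l P k"
proof (rule ccontr)
  assume no_jump: "\<nexists>k. k1 < k \<and> k < k2 \<and> jump_at m n l P k"
  have P: "htg_walk m n l P" using sp unfolding htg_shortest_path_def htg_path_def by simp
  have len: "Suc (Suc k2) \<le> length P" using flat2 unfolding flat_between_def by simp
  define M where "M = drop (Suc k1) (take (Suc k2) P)"
  have len_M: "length M = k2 - k1" using len \<open>k1 < k2\<close> by (simp add: M_def)
  have nth_M: "M ! j = P ! (Suc k1 + j)" if "j < length M" for j
    using that len by (simp add: M_def len_M)
  have "M \<noteq> []" using len_M \<open>k1 < k2\<close> by auto
  have "set M \<subseteq> htg_vert m n"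
    using P set_drop_subset set_take_subset unfolding M_def htg_walk_def by fastforce
  have M_edges: "successively (\<lambda>u v. htg_adj m n l u v \<and> \<not> htg_jump_edge m n l u v \<and>
      \<not> (htg_flat_edge m n u v \<and> {fst u, fst v} = {i, i + 1})) M"
    unfolding M_def using P no_jump no_flat len
    by (subst successively_drop_take_iff) (auto simp: htg_walk_def jump_at_def flat_between_def)
  define c where "c = fst (P ! k1)"
  have "successively (\<lambda>u v. (fst u \<le> i) = (fst v \<le> i)) M"
    using M_edges by (rule successively_mono) (use htg_adj_same_side in blast)
  then have "(fst (hd M) \<le> i) = (fst (last M) \<le> i)"
    using \<open>M \<noteq> []\<close> by (rule successively_eq_hd_last)
  moreover have "hd M = P ! Suc k1" "last M = P ! k2"
    using nth_M[of 0] nth_M[of "length M - 1"] \<open>M \<noteq> []\<close> len_M \<open>k1 < k2\<close>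
    by (simp_all add: hd_conv_nth last_conv_nth)
  ultimately have "fst (P ! Suc k2) = c"
    using flat1 flat2 unfolding flat_between_def c_def by (auto simp: doubleton_eq_iff)
  define W where "W = remdups_adj (map (\<lambda>v. (c, snd v)) M)"
  have "P ! k1 \<in> set P" using len \<open>k1 < k2\<close> by simp
  then have "c < m" using P unfolding c_def htg_walk_def htg_vert_def by auto
  then have "htg_walk m n l W"
    unfolding W_def using \<open>M \<noteq> []\<close> \<open>set M \<subseteq> htg_vert m n\<close> M_edges
    by (intro htg_walk_project_to_column) (auto elim: successively_mono)
  moreover have "snd (P ! k1) = snd (P ! Suc k1)" "snd (P ! k2) = snd (P ! Suc k2)"
    using flat1 flat2 by (auto simp: flat_between_def dest: htg_flat_edge_same_row)
  then have "hd W = P ! k1" "last W = P ! Suc k2"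
    using \<open>M \<noteq> []\<close> \<open>hd M = P ! Suc k1\<close> \<open>last M = P ! k2\<close> \<open>fst (P ! Suc k2) = c\<close>
    by (auto simp: W_def hd_map last_map c_def prod_eq_iff)
  ultimately have "Suc k2 - k1 < length W"
    using sp len \<open>k1 < k2\<close> by (intro shortest_path_segment_length) auto
  moreover have "length W \<le> k2 - k1"
    unfolding W_def using len_M by (metis length_map remdups_adj_length)
  ultimately show False by simp
qed

lemma card_le_1_if_element_between:
  fixes S :: "nat set"
  assumes "finite S" and between: "\<And>x y. x \<in> S \<Longrightarrow> y \<in> S \<Longrightarrow> x < y \<Longrightarrow> \<exists>z\<in>S. x < z \<and> z < y"
  shows "card S \<le> 1"
proof (rule ccontr)
  assume "\<not> card S \<le> 1"
  then obtain x y where "x \<in> S" "y \<in> S" "x < y"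
    using assms(1) card_le_Suc0_iff_eq by (metis One_nat_def linorder_neqE_nat)
  define y' where "y' = Min {z \<in> S. x < z}"
  have "{z \<in> S. x < z} \<noteq> {}" using \<open>y \<in> S\<close> \<open>x < y\<close> by auto
  then have "y' \<in> S" "x < y'"
    using Min_in[of "{z \<in> S. x < z}"] assms(1) by (auto simp: y'_def)
  then obtain z where "z \<in> S" "x < z" "z < y'" using between \<open>x \<in> S\<close> by blast
  moreover have "y' \<le> z" unfolding y'_def using assms(1) \<open>z \<in> S\<close> \<open>x < z\<close> by (intro Min_le) auto
  ultimately show False by simp
qed

theorem lemma6p2:
  fixes m n :: nat and l :: int and P :: "vtx list" and i :: nat
  assumes "htg_params m n l"
    and "htg_shortest_path m n l P"
    and "i + 2 \<le> m"
  shows "(\<forall>k1 k2. k1 < k2 \<and> flat_between m n i P k1 \<and> flat_between m n i P k2 \<and>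
            (\<forall>k. k1 < k \<and> k < k2 \<longrightarrow> \<not> flat_between m n i P k)
          \<longrightarrow> (\<exists>k. k1 < k \<and> k < k2 \<and> jump_at m n l P k))
       \<and> ((\<forall>k. \<not> jump_at m n l P k) \<longrightarrow> card {k. flat_between m n i P k} \<le> 1)"
proof (intro conjI impI)
  show separated: "\<forall>k1 k2. k1 < k2 \<and> flat_between m n i P k1 \<and> flat_between m n i P k2 \<and>
      (\<forall>k. k1 < k \<and> k < k2 \<longrightarrow> \<not> flat_between m n i P k)
    \<longrightarrow> (\<exists>k. k1 < k \<and> k < k2 \<and> jump_at m n l P k)"
    using consecutive_flat_edges_separated_by_jump[OF assms(2)] by blast
  assume "\<forall>k. \<not> jump_at m n l P k"
  show "card {k. flat_between m n i P k} \<le> 1"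
  proof (rule card_le_1_if_element_between)
    show "finite {k. flat_between m n i P k}"
      by (rule finite_subset[of _ "{..<length P}"]) (auto simp: flat_between_def)
  next
    fix x y assume "x \<in> {k. flat_between m n i P k}" "y \<in> {k. flat_between m n i P k}" "x < y"
    then show "\<exists>z\<in>{k. flat_between m n i P k}. x < z \<and> z < y"
      using separated \<open>\<forall>k. \<not> jump_at m n l P k\<close> by blast
  qed
qed

end
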